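(* Every $3$-uniform bi-hypergraph with exactly $6$ vertices and at most $9$ edges is colorable. Consequently $\ell(6,3)\ge 10$.
   Context: A bi-hypergraph $\mathcal H=(V,E)$ consists of a finite vertex set $V$ and a set $E$ of subsets of $V$, called edges, with no edge contained in another. It is $r$-uniform if every edge has exactly $r$ elements. A mapping $f:V\to\mathbb N$ is a proper coloring of $\mathcal H$ if $1<|f(e)|<|e|$ for every $e\in E$, where $f(e)=\{f(v):v\in e\}$. $\mathcal H$ is colorable if it has a proper coloring, and uncolorable otherwise. A subhypergraph of $\mathcal H$ is a bi-hypergraph $(V',E')$ with $V'\subseteq V$, $E'\subseteq E$. $\mathcal H$ is minimal uncolorable if it is uncolorable but every proper subhypergraph of it is colorable. $\ell(n,r)$ is the minimum number of edges of a minimal uncolorable $r$-uniform bi-hypergraph with exactly $n$ vertices ($\infty$ if none exists). *)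

theory Defs
  imports Main "HOL-Library.Extended_Nat"
begin

definition bihypergraph :: "'a set \<Rightarrow> 'a set set \<Rightarrow> bool" where
  "bihypergraph V E \<longleftrightarrow> finite V \<and> (\<forall>e\<in>E. e \<subseteq> V)
     \<and> (\<forall>e\<in>E. \<forall>e'\<in>E. e \<subseteq> e' \<longrightarrow> e = e')"

definition uniform :: "nat \<Rightarrow> 'a set set \<Rightarrow> bool" where
  "uniform r E \<longleftrightarrow> (\<forall>e\<in>E. card e = r)"

definition proper_coloring :: "'a set set \<Rightarrow> ('a \<Rightarrow> nat) \<Rightarrow> bool" where
  "proper_coloring E f \<longleftrightarrow> (\<forall>e\<in>E. 1 < card (f ` e) \<and> card (f ` e) < card e)"

definition colorable :: "'a set \<Rightarrow> 'a set set \<Rightarrow> bool" where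
  "colorable V E \<longleftrightarrow> (\<exists>f. proper_coloring E f)"

definition subhypergraph :: "'a set \<Rightarrow> 'a set set \<Rightarrow> 'a set \<Rightarrow> 'a set set \<Rightarrow> bool" where
  "subhypergraph V' E' V E \<longleftrightarrow> bihypergraph V' E' \<and> V' \<subseteq> V \<and> E' \<subseteq> E"

definition minimal_uncolorable :: "'a set \<Rightarrow> 'a set set \<Rightarrow> bool" where
  "minimal_uncolorable V E \<longleftrightarrow> bihypergraph V E \<and> \<not> colorable V E
     \<and> (\<forall>V' E'. subhypergraph V' E' V E \<and> (V', E') \<noteq> (V, E) \<longrightarrow> colorable V' E')"

text \<open>Vertices are taken from nat,
which is no loss of generality (isomorphism invariance).\<close>
definition ell :: "nat \<Rightarrow> nat \<Rightarrow> enat" where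
  "ell n r = Inf {enat (card E) | (V :: nat set) E.
      minimal_uncolorable V E \<and> uniform r E \<and> card V = n}"

end

theory Submission
  imports Defs
begin

text \<open>Pair every 3-subset A of the 6 vertices with its complement. At most 9 edges and their
complements cover at most 18 of the 20 triples, so some A has neither A nor its complement as
an edge. Every edge is then a triple different from A and from V - A, hence meets both; colouring
A with one colour and V - A with another gives every edge exactly two colours.\<close>

lemma proper_coloring_indicator:
  assumes "\<And>e. e \<in> E \<Longrightarrow> e \<inter> A \<noteq> {} \<and> e - A \<noteq> {} \<and> finite e \<and> card e > 2"
  shows "proper_coloring E (\<lambda>x. if x \<in> A then 0 else 1)"
  unfolding proper_coloring_def
proof
  fix e assume "e \<in> E"
  with assms have meets: "e \<inter> A \<noteq> {}" "e - A \<noteq> {}" and "card e > 2" by auto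
  have "(\<lambda>x. if x \<in> A then 0 else 1) ` e = {0 :: nat, 1}"
    using meets by (auto simp: image_iff)
  then have "card ((\<lambda>x. if x \<in> A then 0 else 1 :: nat) ` e) = 2" by simp
  with \<open>card e > 2\<close> show "1 < card ((\<lambda>x. if x \<in> A then 0 else 1 :: nat) ` e)
      \<and> card ((\<lambda>x. if x \<in> A then 0 else 1 :: nat) ` e) < card e"
    by linarith
qed

lemma meets_half_and_complement:
  assumes "finite V" "card V = 2 * r" "A \<subseteq> V" "card A = r"
    and "e \<subseteq> V" "card e = r" "e \<noteq> A" "e \<noteq> V - A"
  shows "e \<inter> A \<noteq> {} \<and> e - A \<noteq> {}"
proof -
  have "finite A" "card (V - A) = r"
    using assms by (auto simp: card_Diff_subset finite_subset)
  have "\<not> e \<subseteq> A"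
    using assms card_subset_eq \<open>finite A\<close> by blast
  moreover have "\<not> e \<subseteq> V - A"
    using assms \<open>card (V - A) = r\<close> card_subset_eq[of "V - A" e] by auto
  ultimately show ?thesis using \<open>e \<subseteq> V\<close> by blast
qed

lemma exists_half_avoiding_edges_and_complements:
  assumes "finite V" "finite E" "2 * card E < card V choose r"
  obtains A where "A \<subseteq> V" "card A = r" "A \<notin> E" "V - A \<notin> E"
proof -
  let ?covered = "E \<union> (\<lambda>e. V - e) ` E"
  have "card ?covered \<le> 2 * card E"
    using card_Un_le[of E "(\<lambda>e. V - e) ` E"] card_image_le[OF \<open>finite E\<close>, of "\<lambda>e. V - e"]
    by linarith
  then have "card ?covered < card {A. A \<subseteq> V \<and> card A = r}"
    using assms(3) n_subsets[OF \<open>finite V\<close>, of r] by linarith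
  then have "\<not> {A. A \<subseteq> V \<and> card A = r} \<subseteq> ?covered"
    using \<open>finite E\<close> card_mono[of ?covered] by (meson finite_UnI finite_imageI not_le)
  then obtain A where A: "A \<subseteq> V" "card A = r" "A \<notin> ?covered" by blast
  moreover have "V - A \<notin> E"
    using A by (metis Diff_partition double_diff image_eqI Un_iff subset_refl)
  ultimately show ?thesis using that by blast
qed

theorem colorable_if_few_edges:
  assumes "bihypergraph V E" "uniform r E" "card V = 2 * r" "r \<ge> 3"
    and "2 * card E < (2 * r) choose r"
  shows "colorable V E"
proof -
  have "finite V" and sub: "\<And>e. e \<in> E \<Longrightarrow> e \<subseteq> V" and card_e: "\<And>e. e \<in> E \<Longrightarrow> card e = r"
    using assms(1,2) by (auto simp: bihypergraph_def uniform_def)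
  then have "finite E" by (meson Pow_iff finite_Pow_iff finite_subset subsetI)
  then obtain A where A: "A \<subseteq> V" "card A = r" "A \<notin> E" "V - A \<notin> E"
    using exists_half_avoiding_edges_and_complements \<open>finite V\<close> assms(3,5) by metis
  have "e \<inter> A \<noteq> {} \<and> e - A \<noteq> {} \<and> finite e \<and> card e > 2" if "e \<in> E" for e
    using meets_half_and_complement[OF \<open>finite V\<close> assms(3) A(1,2) sub card_e] A(3,4) that
      card_e[OF that] assms(4) card.infinite by fastforce
  then show ?thesis
    unfolding colorable_def using proper_coloring_indicator by blast
qed

lemma ell_ge_if_colorable:
  assumes "\<And>V :: nat set. \<And>E. bihypergraph V E \<Longrightarrow> uniform r E \<Longrightarrow> card V = n
      \<Longrightarrow> card E < k \<Longrightarrow> colorable V E"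
  shows "ell n r \<ge> enat k"
  unfolding ell_def
proof (rule Inf_greatest)
  fix x assume "x \<in> {enat (card E) | (V :: nat set) E.
      minimal_uncolorable V E \<and> uniform r E \<and> card V = n}"
  then obtain V :: "nat set" and E where "x = enat (card E)" "minimal_uncolorable V E"
      "uniform r E" "card V = n" by blast
  with assms show "enat k \<le> x" by (force simp: minimal_uncolorable_def)
qed

lemma colorable_six_vertices:
  assumes "bihypergraph V E" "uniform 3 E" "card V = 6" "card E \<le> 9"
  shows "colorable V E"
proof -
  have "(2 * 3) choose 3 = (20 :: nat)"
    by (simp add: numeral_eq_Suc)
  then show ?thesis
    using colorable_if_few_edges[of V E 3] assms by simp
qed

theorem mainTheorem9:
  shows "(\<forall>(V :: 'a set) E. bihypergraph V E \<and> uniform 3 E \<and> card V = 6 \<and> card E \<le> 9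
            \<longrightarrow> colorable V E) \<and> ell 6 3 \<ge> 10"
proof -
  have "ell 6 3 \<ge> enat 10"
    by (rule ell_ge_if_colorable) (simp add: colorable_six_vertices)
  then show ?thesis
    using colorable_six_vertices by (auto simp: numeral_eq_enat)
qed

end
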